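(* There exist a constant $c>1$ and trees $T$ with arbitrarily large total domination number $\gamma_t=\gamma_t(T)$ such that, with $n$ the order of $T$, $$\Gamma_t(T)\ge c^{\gamma_t}\left(\frac{n-\frac{\gamma_t}{2}}{\frac{\gamma_t}{2}}\right)^{\gamma_t/2}.$$
   Context: For a graph $G$ without isolated vertices, a set $D\subseteq V(G)$ is total dominating if every vertex of $G$ has a neighbour in $D$. The total domination number $\gamma_t(G)$ is the minimum size of a total dominating set, and $\Gamma_t(G)$ is the number of total dominating sets of size $\gamma_t(G)$. *)

theory Defs
  imports Complex_Main
begin

definition simple_graph :: "'a set \<Rightarrow> ('a \<Rightarrow> 'a \<Rightarrow> bool) \<Rightarrow> bool" where
  "simple_graph V E \<longleftrightarrow> finite V \<and> (\<forall>u v. E u v \<longrightarrow> u \<in> V \<and> v \<in> V)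
     \<and> (\<forall>u v. E u v \<longrightarrow> E v u) \<and> (\<forall>v. \<not> E v v)"

fun is_walk :: "('a \<Rightarrow> 'a \<Rightarrow> bool) \<Rightarrow> 'a list \<Rightarrow> bool" where
  "is_walk E [] = False"
| "is_walk E [v] = True"
| "is_walk E (u # v # vs) = (E u v \<and> is_walk E (v # vs))"

definition connected_graph :: "'a set \<Rightarrow> ('a \<Rightarrow> 'a \<Rightarrow> bool) \<Rightarrow> bool" where
  "connected_graph V E \<longleftrightarrow> V \<noteq> {} \<and>
     (\<forall>u\<in>V. \<forall>v\<in>V. \<exists>p. set p \<subseteq> V \<and> is_walk E p \<and> hd p = u \<and> last p = v)"

definition has_cycle :: "'a set \<Rightarrow> ('a \<Rightarrow> 'a \<Rightarrow> bool) \<Rightarrow> bool" where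
  "has_cycle V E \<longleftrightarrow> (\<exists>p. length p \<ge> 3 \<and> distinct p \<and> set p \<subseteq> V \<and> is_walk E p
     \<and> E (last p) (hd p))"

definition is_tree :: "'a set \<Rightarrow> ('a \<Rightarrow> 'a \<Rightarrow> bool) \<Rightarrow> bool" where
  "is_tree V E \<longleftrightarrow> simple_graph V E \<and> connected_graph V E \<and> \<not> has_cycle V E"

definition total_dominating :: "'a set \<Rightarrow> ('a \<Rightarrow> 'a \<Rightarrow> bool) \<Rightarrow> 'a set \<Rightarrow> bool" where
  "total_dominating V E D \<longleftrightarrow> D \<subseteq> V \<and> (\<forall>v\<in>V. \<exists>u\<in>D. E v u)"

definition gamma_t :: "'a set \<Rightarrow> ('a \<Rightarrow> 'a \<Rightarrow> bool) \<Rightarrow> nat" where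
  "gamma_t V E = (LEAST k. \<exists>D. total_dominating V E D \<and> card D = k)"

definition Gamma_t :: "'a set \<Rightarrow> ('a \<Rightarrow> 'a \<Rightarrow> bool) \<Rightarrow> nat" where
  "Gamma_t V E = card {D. total_dominating V E D \<and> card D = gamma_t V E}"

end

theory Submission
  imports Defs "HOL-Library.FuncSet"
begin

text \<open>Chain \<open>k\<close> copies of a 22-vertex tree gadget by joining their roots along a path. The gadget has
  14 vertices with pairwise disjoint open neighbourhoods that avoid the root, so each copy needs 14
  vertices of any total dominating set; conversely, total dominating sets with exactly 14 vertices
  in every copy can be chosen independently in 225 ways per copy. So \<open>n = 22 k\<close>, \<open>\<gamma>\<^sub>t = 14 k\<close> and
  \<open>\<Gamma>\<^sub>t \<ge> 225\<^sup>k\<close>, whereas the right-hand side is \<open>c\<^sup>1\<^sup>4\<^sup>k (15/7)\<^sup>7\<^sup>k\<close> and \<open>(15/7)\<^sup>7 < 225\<close>.\<close>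

lemma is_walk_nonempty: "is_walk E p \<Longrightarrow> p \<noteq> []"
  by (cases p) auto

lemma is_walk_append: "is_walk E p \<Longrightarrow> is_walk E q \<Longrightarrow> last p = hd q \<Longrightarrow> is_walk E (p @ tl q)"
proof (induction E p rule: is_walk.induct)
  case (2 E v) then show ?case by (cases q) auto
qed auto

lemma is_walk_rev: "(\<And>u v. E u v \<Longrightarrow> E v u) \<Longrightarrow> is_walk E p \<Longrightarrow> is_walk E (rev p)"
proof (induction E p rule: is_walk.induct)
  case (3 E u v vs)
  then have "is_walk E ((rev vs @ [v]) @ tl [v, u])"
    by (intro is_walk_append) auto
  then show ?case by simp
qed auto

lemma is_walk_nth: "is_walk E p \<Longrightarrow> Suc j < length p \<Longrightarrow> E (p ! j) (p ! Suc j)"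
proof (induction E p arbitrary: j rule: is_walk.induct)
  case (3 E u v vs) then show ?case by (cases j) auto
qed auto

lemma connected_graphI_root:
  assumes sym: "\<And>u v. E u v \<Longrightarrow> E v u" and "r \<in> V"
    and to_root: "\<And>v. v \<in> V \<Longrightarrow> \<exists>p. set p \<subseteq> V \<and> is_walk E p \<and> hd p = v \<and> last p = r"
  shows "connected_graph V E"
  unfolding connected_graph_def
proof (intro conjI ballI)
  show "V \<noteq> {}" using \<open>r \<in> V\<close> by blast
  fix u v assume "u \<in> V" "v \<in> V"
  obtain p where p: "set p \<subseteq> V" "is_walk E p" "hd p = u" "last p = r"
    using to_root \<open>u \<in> V\<close> by blast
  obtain q where q: "set q \<subseteq> V" "is_walk E q" "hd q = v" "last q = r"
    using to_root \<open>v \<in> V\<close> by blast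
  have "p \<noteq> []" "q \<noteq> []" using p(2) q(2) is_walk_nonempty by blast+
  have "is_walk E (p @ tl (rev q))"
    using is_walk_append[OF p(2) is_walk_rev[of E, OF sym q(2)]] p(4) q(4) \<open>q \<noteq> []\<close> by (simp add: hd_rev)
  moreover have "set (p @ tl (rev q)) \<subseteq> V"
    using p(1) q(1) by (cases "rev q") auto
  moreover have "last (p @ tl (rev q)) = v"
  proof (cases "tl (rev q) = []")
    case True
    then have "q = [v]" using \<open>q \<noteq> []\<close> q(3) by (cases q rule: rev_cases) auto
    then show ?thesis using True p(4) q(4) by simp
  next
    case False
    then show ?thesis using q(3) \<open>q \<noteq> []\<close> by (simp add: last_tl last_rev)
  qed
  ultimately show "\<exists>w. set w \<subseteq> V \<and> is_walk E w \<and> hd w = u \<and> last w = v"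
    using p(3) \<open>p \<noteq> []\<close> by (intro exI[of _ "p @ tl (rev q)"]) auto
qed

text \<open>On a cycle, the largest vertex has two distinct neighbours, both smaller than it.\<close>
lemma not_has_cycle_if_unique_lower_neighbour:
  fixes E :: "'a::linorder \<Rightarrow> 'a \<Rightarrow> bool"
  assumes sym: "\<And>u v. E u v \<Longrightarrow> E v u" and irrefl: "\<And>v. \<not> E v v"
    and lower: "\<And>v u w. E v u \<Longrightarrow> E v w \<Longrightarrow> u < v \<Longrightarrow> w < v \<Longrightarrow> u = w"
  shows "\<not> has_cycle V E"
proof
  assume "has_cycle V E"
  then obtain p where p: "length p \<ge> 3" "distinct p" "is_walk E p" "E (last p) (hd p)"
    unfolding has_cycle_def by blast
  define L where "L = length p"
  define nxt where "nxt j = (if Suc j < L then Suc j else 0)" for j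
  have adj: "E (p ! j) (p ! nxt j)" if "j < L" for j
  proof (cases "Suc j < L")
    case True
    then show ?thesis using is_walk_nth[OF p(3)] by (simp add: nxt_def L_def)
  next
    case False
    then have "j = L - 1" "p \<noteq> []" using that p(1) by (auto simp: L_def)
    then have "p ! j = last p" "p ! nxt j = hd p"
      using False by (simp_all add: nxt_def L_def last_conv_nth hd_conv_nth)
    then show ?thesis using p(4) by simp
  qed
  obtain i where i: "i < L" "p ! i = Max (set p)"
  proof -
    have "Max (set p) \<in> set p" using p(1) by (intro Max_in) auto
    then show ?thesis using that by (auto simp: in_set_conv_nth L_def)
  qed
  define prv where "prv = (if i = 0 then L - 1 else i - 1)"
  have prv: "prv < L" "nxt prv = i" and nxt: "nxt i < L" "nxt i \<noteq> prv"
    using i p(1) by (auto simp: prv_def nxt_def L_def)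
  have edges: "E (p ! i) (p ! nxt i)" "E (p ! i) (p ! prv)"
    using adj[OF i(1)] adj[OF prv(1)] prv(2) sym by auto
  have "p ! j \<le> p ! i" if "j < L" for j
    using that i(2) by (simp add: L_def)
  then have "p ! nxt i < p ! i" "p ! prv < p ! i"
    using edges irrefl nxt(1) prv(1) by (metis order_le_neq_trans)+
  with edges have "p ! nxt i = p ! prv" using lower by blast
  then show False using nxt prv(1) p(2) by (simp add: nth_eq_iff_index_eq L_def)
qed

lemma card_le_card_total_dominating:
  assumes "total_dominating V E D" "finite V" "W \<subseteq> V"
    and private_neighbours: "\<And>z z' q. z \<in> W \<Longrightarrow> z' \<in> W \<Longrightarrow> E z q \<Longrightarrow> E z' q \<Longrightarrow> z = z'"
  shows "card W \<le> card D"
proof -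
  have "\<forall>z\<in>W. \<exists>q\<in>D. E z q" using assms(1,3) unfolding total_dominating_def by blast
  then obtain f where f: "\<And>z. z \<in> W \<Longrightarrow> f z \<in> D \<and> E z (f z)" by metis
  then have "inj_on f W" using private_neighbours by (metis inj_onI)
  moreover have "f ` W \<subseteq> D" using f by blast
  moreover have "finite D" using assms(1,2) finite_subset unfolding total_dominating_def by blast
  ultimately show ?thesis by (rule card_inj_on_le)
qed

lemma gamma_t_eqI:
  assumes "total_dominating V E D" "card D = g" "\<And>D. total_dominating V E D \<Longrightarrow> g \<le> card D"
  shows "gamma_t V E = g"
  unfolding gamma_t_def by (rule Least_equality) (use assms in auto)

lemma card_le_Gamma_t:
  assumes "finite V" "\<And>D. D \<in> \<D> \<Longrightarrow> total_dominating V E D \<and> card D = gamma_t V E"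
  shows "card \<D> \<le> Gamma_t V E"
  unfolding Gamma_t_def
proof (rule card_mono)
  show "finite {D. total_dominating V E D \<and> card D = gamma_t V E}"
    by (rule finite_subset[of _ "Pow V"]) (use assms(1) in \<open>auto simp: total_dominating_def\<close>)
qed (use assms(2) in blast)

definition parent_graph :: "nat \<Rightarrow> (nat \<Rightarrow> nat) \<Rightarrow> nat \<Rightarrow> nat \<Rightarrow> bool" where
  "parent_graph n p u v \<longleftrightarrow> u < n \<and> v < n \<and> (0 < v \<and> u = p v \<or> 0 < u \<and> v = p u)"

locale parent_function =
  fixes p :: "nat \<Rightarrow> nat"
  assumes parent_less: "0 < v \<Longrightarrow> p v < v"
begin

lemma parent_graph_lower: "parent_graph n p v u \<Longrightarrow> u < v \<Longrightarrow> u = p v"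
  using parent_less[of u] by (auto simp: parent_graph_def)

lemma walk_to_root:
  "v < n \<Longrightarrow> \<exists>w. set w \<subseteq> {..<n} \<and> is_walk (parent_graph n p) w \<and> hd w = v \<and> last w = 0"
proof (induction v rule: less_induct)
  case (less v)
  show ?case
  proof (cases "v = 0")
    case True
    then show ?thesis using less.prems by (intro exI[of _ "[0]"]) auto
  next
    case False
    then have "p v < v" using parent_less by simp
    with less obtain w where w: "set w \<subseteq> {..<n}" "is_walk (parent_graph n p) w" "hd w = p v" "last w = 0"
      by fastforce
    have "w \<noteq> []" using w(2) is_walk_nonempty by blast
    moreover have "parent_graph n p v (p v)" using False less.prems \<open>p v < v\<close> by (auto simp: parent_graph_def)
    ultimately show ?thesis using w less.prems by (intro exI[of _ "v # w"]) (auto simp: neq_Nil_conv)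
  qed
qed

lemma parent_graph_sym: "parent_graph n p u v \<Longrightarrow> parent_graph n p v u"
  by (auto simp: parent_graph_def)

lemma parent_graph_irrefl: "\<not> parent_graph n p v v"
  using parent_less[of v] by (auto simp: parent_graph_def)

theorem is_tree_parent_graph:
  assumes "0 < n"
  shows "is_tree {..<n} (parent_graph n p)"
  unfolding is_tree_def
proof (intro conjI)
  show "simple_graph {..<n} (parent_graph n p)"
    using parent_graph_irrefl parent_graph_sym by (auto simp: simple_graph_def parent_graph_def)
  show "connected_graph {..<n} (parent_graph n p)"
    using walk_to_root assms parent_graph_sym by (intro connected_graphI_root[where r = 0]) auto
  show "\<not> has_cycle {..<n} (parent_graph n p)"
  proof (rule not_has_cycle_if_unique_lower_neighbour[OF parent_graph_sym parent_graph_irrefl])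
    fix v u w assume "parent_graph n p v u" "parent_graph n p v w" "u < v" "w < v"
    then have "u = p v" "w = p v" using parent_graph_lower by blast+
    then show "u = w" by simp
  qed
qed

end

text \<open>Copy \<open>i\<close> of a rooted tree on \<open>{..<m}\<close> occupies \<open>m * i + j\<close>, \<open>j < m\<close>; the root of each
  copy is attached to the root of the previous one.\<close>
definition chain_parent :: "nat \<Rightarrow> (nat \<Rightarrow> nat) \<Rightarrow> nat \<Rightarrow> nat" where
  "chain_parent m p v = (if v mod m = 0 then v - m else m * (v div m) + p (v mod m))"

definition blocks :: "nat \<Rightarrow> nat \<Rightarrow> (nat \<Rightarrow> nat set) \<Rightarrow> nat set" where
  "blocks m k G = {v. v < m * k \<and> v mod m \<in> G (v div m)}"

lemma block_index_less: "i < k \<Longrightarrow> j < m \<Longrightarrow> m * i + j < m * (k::nat)"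
proof -
  assume "i < k" "j < m"
  then have "m * i + j < m * (i + 1)" by simp
  also have "\<dots> \<le> m * k" using \<open>i < k\<close> by (intro mult_le_mono2) simp
  finally show ?thesis .
qed

lemma mem_blocks: "i < k \<Longrightarrow> j < m \<Longrightarrow> m * i + j \<in> blocks m k G \<longleftrightarrow> j \<in> G i"
  by (simp add: blocks_def block_index_less)

lemma card_blocks:
  assumes "\<And>i. i < k \<Longrightarrow> G i \<subseteq> {..<m}"
  shows "card (blocks m k G) = (\<Sum>i<k. card (G i))"
proof -
  have "blocks m k G = (\<lambda>(i, j). m * i + j) ` (SIGMA i:{..<k}. G i)"
  proof (intro equalityI subsetI)
    fix v assume v: "v \<in> blocks m k G"
    then have "v div m < k" using less_mult_imp_div_less[of v k m] by (simp add: blocks_def mult.commute)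
    then have "(v div m, v mod m) \<in> (SIGMA i:{..<k}. G i)"
      using v by (simp add: blocks_def)
    moreover have "v = (\<lambda>(i, j). m * i + j) (v div m, v mod m)" by simp
    ultimately show "v \<in> (\<lambda>(i, j). m * i + j) ` (SIGMA i:{..<k}. G i)"
      by (rule rev_image_eqI)
  next
    fix v assume "v \<in> (\<lambda>(i, j). m * i + j) ` (SIGMA i:{..<k}. G i)"
    then obtain i j where ij: "i < k" "j \<in> G i" "v = m * i + j"
      by (elim imageE SigmaE) auto
    then have "j < m" using assms by blast
    then show "v \<in> blocks m k G" using mem_blocks[OF ij(1) \<open>j < m\<close>] ij by simp
  qed
  moreover have "inj_on (\<lambda>(i, j). m * i + j) (SIGMA i:{..<k}. G i)"
  proof (rule inj_on_inverseI[where g = "\<lambda>v. (v div m, v mod m)"])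
    fix x assume "x \<in> (SIGMA i:{..<k}. G i)"
    then obtain i j where ij: "x = (i, j)" "i < k" "j \<in> G i" by (elim SigmaE) auto
    then have "j < m" using assms by blast
    then show "((\<lambda>(i, j). m * i + j) x div m, (\<lambda>(i, j). m * i + j) x mod m) = x" using ij(1) by simp
  qed
  moreover have "finite (G i)" if "i < k" for i
    using assms[OF that] finite_subset by blast
  ultimately show ?thesis
    by (simp add: card_image card_SigmaI)
qed

lemma blocks_eqD:
  assumes "blocks m k G = blocks m k H" "i < k" "G i \<subseteq> {..<m}" "H i \<subseteq> {..<m}"
  shows "G i = H i"
proof (intro set_eqI iffI)
  fix j assume "j \<in> G i"
  then have "j < m" using assms(3) by blast
  then show "j \<in> H i" using mem_blocks[OF assms(2) \<open>j < m\<close>, of G] mem_blocks[OF assms(2) \<open>j < m\<close>, of H]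
      assms(1) \<open>j \<in> G i\<close> by simp
next
  fix j assume "j \<in> H i"
  then have "j < m" using assms(4) by blast
  then show "j \<in> G i" using mem_blocks[OF assms(2) \<open>j < m\<close>, of G] mem_blocks[OF assms(2) \<open>j < m\<close>, of H]
      assms(1) \<open>j \<in> H i\<close> by simp
qed

context parent_function
begin

lemma parent_function_chain_parent: "parent_function (chain_parent m p)"
proof
  fix v :: nat assume "0 < v"
  show "chain_parent m p v < v"
  proof (cases "v mod m = 0")
    case True
    then have "m \<noteq> 0" using \<open>0 < v\<close> by auto
    then show ?thesis using True \<open>0 < v\<close> by (simp add: chain_parent_def)
  next
    case False
    then have "p (v mod m) < v mod m" using parent_less by simp
    moreover have "m * (v div m) + v mod m = v" by simp
    moreover have "chain_parent m p v = m * (v div m) + p (v mod m)"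
      using False by (simp add: chain_parent_def)
    ultimately show ?thesis by linarith
  qed
qed

lemma chain_parent_in_block: "0 < j \<Longrightarrow> j < m \<Longrightarrow> chain_parent m p (m * i + j) = m * i + p j"
  by (simp add: chain_parent_def)

lemma parent_graph_chainI:
  assumes "i < k" "parent_graph m p j q"
  shows "parent_graph (m * k) (chain_parent m p) (m * i + j) (m * i + q)"
proof -
  have bounds: "m * i + j < m * k" "m * i + q < m * k"
    using assms block_index_less by (auto simp: parent_graph_def)
  from assms(2) consider "0 < q" "j = p q" | "0 < j" "q = p j"
    by (auto simp: parent_graph_def)
  then show ?thesis
  proof cases
    case 1
    then have "chain_parent m p (m * i + q) = m * i + j"
      using assms(2) chain_parent_in_block by (auto simp: parent_graph_def)
    then show ?thesis using bounds 1 by (auto simp: parent_graph_def)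
  next
    case 2
    then have "chain_parent m p (m * i + j) = m * i + q"
      using assms(2) chain_parent_in_block by (auto simp: parent_graph_def)
    then show ?thesis using bounds 2 by (auto simp: parent_graph_def)
  qed
qed

lemma parent_graph_chainD:
  assumes "parent_graph (m * k) (chain_parent m p) z q" "z mod m \<noteq> 0"
  shows "q div m = z div m \<and> parent_graph m p (z mod m) (q mod m)"
proof -
  have "0 < m" using assms(1) by (intro gr0I) (simp add: parent_graph_def)
  have parent_in_block: "p (v mod m) < m" if "v mod m \<noteq> 0" for v
    using parent_less[of "v mod m"] that mod_less_divisor[OF \<open>0 < m\<close>, of v] by simp
  have lower_in_block: "u div m = v div m \<and> u mod m = p (v mod m)" if "u = chain_parent m p v" "v mod m \<noteq> 0" for u v
    using that parent_in_block[OF that(2)] by (simp add: chain_parent_def)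
  from assms(1) consider "q = chain_parent m p z" | "0 < q" "z = chain_parent m p q"
    by (auto simp: parent_graph_def)
  then show ?thesis
  proof cases
    case 1
    then show ?thesis
      using lower_in_block[OF 1 assms(2)] parent_in_block[OF assms(2)] assms(2) \<open>0 < m\<close>
      by (auto simp: parent_graph_def)
  next
    case 2
    have "q mod m \<noteq> 0"
    proof
      assume "q mod m = 0"
      then have "m \<le> q" "z = q - m" using 2 by (auto simp: chain_parent_def elim: dvdE)
      then show False using \<open>q mod m = 0\<close> assms(2) by (simp add: mod_diff_right_eq[symmetric] le_mod_geq)
    qed
    then show ?thesis
      using lower_in_block[OF 2(2)] parent_in_block[of q] \<open>0 < m\<close> by (auto simp: parent_graph_def)
  qed
qed

lemma total_dominating_blocks:
  assumes "\<And>i. i < k \<Longrightarrow> total_dominating {..<m} (parent_graph m p) (G i)"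
  shows "total_dominating {..<m * k} (parent_graph (m * k) (chain_parent m p)) (blocks m k G)"
  unfolding total_dominating_def
proof (intro conjI ballI)
  show "blocks m k G \<subseteq> {..<m * k}" by (auto simp: blocks_def)
  fix v assume "v \<in> {..<m * k}"
  then have "v < k * m" by (simp add: mult.commute)
  then have "0 < m" by (intro gr0I) simp
  then have "v div m < k" "v mod m < m" using \<open>v < k * m\<close> by (simp_all add: less_mult_imp_div_less)
  then obtain u where u: "u \<in> G (v div m)" "parent_graph m p (v mod m) u"
    using assms[of "v div m"] by (auto simp: total_dominating_def)
  then have "u < m" by (auto simp: parent_graph_def)
  have "parent_graph (m * k) (chain_parent m p) v (m * (v div m) + u)"
    using parent_graph_chainI[OF \<open>v div m < k\<close> u(2)] by simp
  moreover have "m * (v div m) + u \<in> blocks m k G"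
    using mem_blocks[OF \<open>v div m < k\<close> \<open>u < m\<close>] u(1) by simp
  ultimately show "\<exists>u\<in>blocks m k G. parent_graph (m * k) (chain_parent m p) v u" by blast
qed

lemma card_total_dominating_chain_ge:
  assumes D: "total_dominating {..<m * k} (parent_graph (m * k) (chain_parent m p)) D"
    and W: "W \<subseteq> {0<..<m}"
    and private_neighbours:
      "\<And>z z' q. z \<in> W \<Longrightarrow> z' \<in> W \<Longrightarrow> parent_graph m p z q \<Longrightarrow> parent_graph m p z' q \<Longrightarrow> z = z'"
  shows "k * card W \<le> card D"
proof -
  have "card (blocks m k (\<lambda>_. W)) \<le> card D"
  proof (rule card_le_card_total_dominating[OF D])
    show "blocks m k (\<lambda>_. W) \<subseteq> {..<m * k}" by (auto simp: blocks_def)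
    fix z z' q assume z: "z \<in> blocks m k (\<lambda>_. W)" "z' \<in> blocks m k (\<lambda>_. W)"
      and edges: "parent_graph (m * k) (chain_parent m p) z q" "parent_graph (m * k) (chain_parent m p) z' q"
    then have "z mod m \<in> W" "z' mod m \<in> W" by (auto simp: blocks_def)
    then have "q div m = z div m" "parent_graph m p (z mod m) (q mod m)"
      "q div m = z' div m" "parent_graph m p (z' mod m) (q mod m)"
      using parent_graph_chainD[OF edges(1)] parent_graph_chainD[OF edges(2)] W by auto
    then show "z = z'" using private_neighbours \<open>z mod m \<in> W\<close> \<open>z' mod m \<in> W\<close>
      by (metis div_mult_mod_eq)
  qed simp
  moreover have "card (blocks m k (\<lambda>_. W)) = k * card W"
    using W by (subst card_blocks) auto
  ultimately show ?thesis by simp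
qed

end

text \<open>The gadget, rooted at \<open>0\<close>: spiders with centres \<open>0\<close> and \<open>12\<close> and legs \<open>c - j - j+3 - j+6\<close> (\<open>j = 1,2,3\<close>
  for \<open>c = 0\<close>, \<open>j = 13,14,15\<close> for \<open>c = 12\<close>), joined by the path \<open>0 - 10 - 11 - 12\<close>.\<close>
definition gadget_parent :: "nat \<Rightarrow> nat" where
  "gadget_parent j = (if j \<in> {1,2,3,10} then 0 else if j \<in> {11,12} then j - 1
     else if j \<in> {13,14,15} then 12 else j - 3)"

text \<open>The total dominating sets used below contain the middle vertex \<open>j+3\<close> of every leg, one of
  \<open>j, j+6\<close> on each leg, one of \<open>0, 11\<close> and one of \<open>10, 12\<close>. Such a set is encoded by its traces
  \<open>S \<subseteq> {1,2,3,12}\<close> and \<open>S' \<subseteq> {0,13,14,15}\<close>; the spider centres are dominated exactly when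
  \<open>S \<noteq> {12}\<close> and \<open>S' \<noteq> {0}\<close>, leaving \<open>15\<close> choices on each side.\<close>
definition gadget_tds :: "nat set \<times> nat set \<Rightarrow> nat set" where
  "gadget_tds = (\<lambda>(S, S'). {4,5,6,16,17,18} \<union> (\<lambda>j. if j \<in> S \<union> S' then j else j + 6) ` {1,2,3,13,14,15}
     \<union> {if 12 \<in> S then 12 else 10, if 0 \<in> S' then 0 else 11})"

definition gadget_configs :: "(nat set \<times> nat set) set" where
  "gadget_configs = (Pow {1,2,3,12} - {{12}}) \<times> (Pow {0,13,14,15} - {{0}})"

definition gadget_witnesses :: "nat set" where
  "gadget_witnesses = {4,5,6,7,8,9,10,11,16,17,18,19,20,21}"

lemma less_22_cases: "j < (22::nat) \<Longrightarrow> j \<in> {21,20,19,18,17,16,15,14,13,12,11,10,9,8,7,6,5,4,3,2,1,0}"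
proof -
  assume "j < 22"
  then have "j \<in> {..<22}" by simp
  then show ?thesis by (simp add: lessThan_nat_numeral)
qed

lemma gadget_tds_subset: "gadget_tds C \<subseteq> {..<22}"
  by (cases C) (auto simp: gadget_tds_def)

lemma gadget_tds_dominates_legs:
  assumes "v \<in> {1,2,3,4,5,6,7,8,9,13,14,15,16,17,18,19,20,21}"
  shows "\<exists>u\<in>gadget_tds (S, S'). parent_graph 22 gadget_parent v u"
proof -
  let ?D = "gadget_tds (S, S')" and ?E = "parent_graph 22 gadget_parent"
  have middle: "{4,5,6,16,17,18} \<subseteq> ?D"
    by (auto simp: gadget_tds_def)
  have leg: "(if j \<in> S \<union> S' then j else j + 6) \<in> ?D" if "j \<in> {1,2,3,13,14,15}" for j
    using that by (auto simp: gadget_tds_def)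
  consider "v \<in> {1,2,3,13,14,15}" | "v \<in> {7,8,9,19,20,21}" | "v \<in> {4,5,6,16,17,18}"
    using assms by blast
  then show ?thesis
  proof cases
    case 1
    then have "v + 3 \<in> {4,5,6,16,17,18}" "?E v (v + 3)"
      by (elim insertE emptyE; simp add: parent_graph_def gadget_parent_def)+
    then show ?thesis using middle by blast
  next
    case 2
    then have "v - 3 \<in> {4,5,6,16,17,18}" "?E v (v - 3)"
      by (elim insertE emptyE; simp add: parent_graph_def gadget_parent_def)+
    then show ?thesis using middle by blast
  next
    case 3
    then have "v - 3 \<in> {1,2,3,13,14,15}" "?E v (v - 3)" "?E v (v + 3)" "v - 3 + 6 = v + 3"
      by (elim insertE emptyE; simp add: parent_graph_def gadget_parent_def)+
    then show ?thesis using leg[of "v - 3"] by (metis (full_types))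
  qed
qed

lemma gadget_tds_dominates_spine:
  assumes "(S, S') \<in> gadget_configs" "v \<in> {0,10,11,12}"
  shows "\<exists>u\<in>gadget_tds (S, S'). parent_graph 22 gadget_parent v u"
proof -
  let ?D = "gadget_tds (S, S')" and ?E = "parent_graph 22 gadget_parent"
  have S: "S \<subseteq> {1,2,3,12}" "S \<noteq> {12}" "S' \<subseteq> {0,13,14,15}" "S' \<noteq> {0}"
    using assms(1) by (auto simp: gadget_configs_def)
  have bridge: "(if 12 \<in> S then 12 else 10) \<in> ?D" "(if 0 \<in> S' then 0 else 11) \<in> ?D"
    and leg: "\<And>j. j \<in> S \<union> S' \<Longrightarrow> j \<in> {1,2,3,13,14,15} \<Longrightarrow> j \<in> ?D"
    by (auto simp: gadget_tds_def)
  have edges: "?E 10 (if 0 \<in> S' then 0 else 11)" "?E 11 (if 12 \<in> S then 12 else 10)" "?E 0 10" "?E 12 11"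
    by (simp_all add: parent_graph_def gadget_parent_def)
  have "\<exists>u\<in>?D. ?E 0 u"
  proof (cases "12 \<in> S")
    case True
    then obtain j where "j \<in> S" "j \<in> {1,2,3}" using S(1,2) by blast
    moreover from this have "?E 0 j" by (auto simp: parent_graph_def gadget_parent_def)
    ultimately show ?thesis using leg[of j] by auto
  qed (use edges bridge in auto)
  moreover have "\<exists>u\<in>?D. ?E 12 u"
  proof (cases "0 \<in> S'")
    case True
    then obtain j where "j \<in> S'" "j \<in> {13,14,15}" using S(3,4) by blast
    moreover from this have "?E 12 j" by (auto simp: parent_graph_def gadget_parent_def)
    ultimately show ?thesis using leg[of j] by auto
  qed (use edges bridge in auto)
  ultimately show ?thesis using assms(2) edges bridge by blast
qed

lemma gadget_tds_total_dominating:
  assumes "C \<in> gadget_configs"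
  shows "total_dominating {..<22} (parent_graph 22 gadget_parent) (gadget_tds C)"
proof -
  obtain S S' where C: "C = (S, S')" by fastforce
  have "\<exists>u\<in>gadget_tds C. parent_graph 22 gadget_parent v u" if "v < 22" for v
    using less_22_cases[OF that] gadget_tds_dominates_legs[of v S S'] gadget_tds_dominates_spine[of S S' v]
      assms C by blast
  then show ?thesis
    using gadget_tds_subset by (auto simp: total_dominating_def)
qed

lemma gadget_witnesses_disjoint_neighbourhoods:
  assumes "z \<in> gadget_witnesses" "z' \<in> gadget_witnesses"
    "parent_graph 22 gadget_parent z q" "parent_graph 22 gadget_parent z' q"
  shows "z = z'"
proof -
  \<comment> \<open>\<open>owner q\<close> is the only witness adjacent to \<open>q\<close>\<close>
  define owner where "owner = nth [10,4,5,6,7,8,9,4,5,6,11,10,11,16,17,18,19,20,21,16,17,18::nat]"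
  have "w = owner q" if "w \<in> gadget_witnesses" "parent_graph 22 gadget_parent w q" for w
  proof -
    from that(2) consider "q < 22" "0 < q" "w = gadget_parent q" | "0 < w" "q = gadget_parent w"
      by (auto simp: parent_graph_def)
    then show ?thesis
    proof cases
      case 1
      from less_22_cases[OF 1(1)] show ?thesis using 1(2,3) that(1)
        by (elim insertE emptyE) (simp_all add: gadget_witnesses_def gadget_parent_def owner_def)
    next
      case 2
      from that(1)[unfolded gadget_witnesses_def] show ?thesis using 2(2)
        by (elim insertE emptyE) (simp_all add: gadget_parent_def owner_def)
    qed
  qed
  then show ?thesis using assms by metis
qed

lemma card_gadget_tds_le: "card (gadget_tds C) \<le> 14"
proof -
  obtain S S' where C: "C = (S, S')" by fastforce
  let ?A = "{4,5,6,16,17,18::nat}" and ?B = "(\<lambda>j. if j \<in> S \<union> S' then j else j + 6) ` {1,2,3,13,14,15::nat}"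
    and ?C = "{if 12 \<in> S then 12 else 10, if 0 \<in> S' then 0 else 11::nat}"
  have "card (gadget_tds C) \<le> card ?A + card ?B + card ?C"
    unfolding C gadget_tds_def by (simp only: case_prod_conv) (meson card_Un_le add_le_mono order_trans le_refl)
  also have "\<dots> \<le> 6 + 6 + 2"
    by (intro add_mono card_image_le[THEN order_trans]) (auto intro: card_insert_le_m1)
  finally show ?thesis by simp
qed

lemma mem_gadget_tds_selector:
  assumes "S \<subseteq> {1,2,3,12}" "S' \<subseteq> {0,13,14,15}" "u \<in> {1,2,3,12,0,13,14,15}"
  shows "u \<in> gadget_tds (S, S') \<longleftrightarrow> u \<in> S \<union> S'"
  using assms(3)
  by (elim insertE emptyE) (use assms(1,2) in \<open>auto simp: gadget_tds_def\<close>)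

lemma inj_on_gadget_tds: "inj_on gadget_tds gadget_configs"
proof -
  have selects: "S = gadget_tds (S, S') \<inter> {1,2,3,12}" "S' = gadget_tds (S, S') \<inter> {0,13,14,15}"
    if "(S, S') \<in> gadget_configs" for S S'
  proof -
    have S: "S \<subseteq> {1,2,3,12}" "S' \<subseteq> {0,13,14,15}" using that by (auto simp: gadget_configs_def)
    have "gadget_tds (S, S') \<inter> A = (S \<union> S') \<inter> A" if "A \<subseteq> {1,2,3,12,0,13,14,15}" for A
      using mem_gadget_tds_selector[OF S] that by blast
    moreover have "(S \<union> S') \<inter> {1,2,3,12} = S" "(S \<union> S') \<inter> {0,13,14,15} = S'" using S by auto
    ultimately show "S = gadget_tds (S, S') \<inter> {1,2,3,12}" "S' = gadget_tds (S, S') \<inter> {0,13,14,15}"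
      by auto
  qed
  show ?thesis
    by (rule inj_onI) (metis prod.exhaust selects)
qed

lemma card_gadget_configs: "card gadget_configs = 225"
  by (simp add: gadget_configs_def card_cartesian_product card_Diff_singleton card_Pow)

interpretation gadget: parent_function gadget_parent
  by unfold_locales (auto simp: gadget_parent_def)

abbreviation gadget_chain :: "nat \<Rightarrow> nat \<Rightarrow> nat \<Rightarrow> bool" where
  "gadget_chain k \<equiv> parent_graph (22 * k) (chain_parent 22 gadget_parent)"

lemma card_total_dominating_gadget_chain_ge:
  assumes "total_dominating {..<22 * k} (gadget_chain k) D"
  shows "14 * k \<le> card D"
proof -
  have "k * card gadget_witnesses \<le> card D"
    by (rule gadget.card_total_dominating_chain_ge[OF assms _ gadget_witnesses_disjoint_neighbourhoods])
      (auto simp: gadget_witnesses_def)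
  moreover have "card gadget_witnesses = 14" by (simp add: gadget_witnesses_def)
  ultimately show ?thesis by simp
qed

lemma gadget_chain_tds:
  assumes "F \<in> {..<k} \<rightarrow> gadget_configs"
  shows "total_dominating {..<22 * k} (gadget_chain k) (blocks 22 k (gadget_tds \<circ> F))"
    and "card (blocks 22 k (gadget_tds \<circ> F)) = 14 * k"
proof -
  show tds: "total_dominating {..<22 * k} (gadget_chain k) (blocks 22 k (gadget_tds \<circ> F))"
    using assms by (intro gadget.total_dominating_blocks) (auto intro: gadget_tds_total_dominating)
  have "card (blocks 22 k (gadget_tds \<circ> F)) = (\<Sum>i<k. card (gadget_tds (F i)))"
    using gadget_tds_subset by (subst card_blocks) auto
  also have "\<dots> \<le> 14 * k"
    using sum_mono[of "{..<k}" "\<lambda>i. card (gadget_tds (F i))" "\<lambda>_. 14"] card_gadget_tds_le by simp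
  finally show "card (blocks 22 k (gadget_tds \<circ> F)) = 14 * k"
    using card_total_dominating_gadget_chain_ge[OF tds] by simp
qed

lemma gamma_t_gadget_chain: "gamma_t {..<22 * k} (gadget_chain k) = 14 * k"
proof -
  have "({1}, {13}) \<in> gadget_configs" by (simp add: gadget_configs_def)
  then have "(\<lambda>_. ({1}, {13})) \<in> {..<k} \<rightarrow> gadget_configs" by simp
  from gadget_chain_tds[OF this] show ?thesis
    by (rule gamma_t_eqI) (rule card_total_dominating_gadget_chain_ge)
qed

lemma Gamma_t_gadget_chain: "225 ^ k \<le> Gamma_t {..<22 * k} (gadget_chain k)"
proof -
  let ?configs = "PiE {..<k} (\<lambda>_. gadget_configs)"
  let ?tds = "\<lambda>F. blocks 22 k (gadget_tds \<circ> F)"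
  have "inj_on ?tds ?configs"
  proof (rule inj_onI)
    fix F G assume F: "F \<in> ?configs" and G: "G \<in> ?configs" and eq: "?tds F = ?tds G"
    have "F i = G i" if "i < k" for i
    proof (rule inj_onD[OF inj_on_gadget_tds])
      show "gadget_tds (F i) = gadget_tds (G i)"
        using blocks_eqD[OF eq that] gadget_tds_subset by simp
      show "F i \<in> gadget_configs" "G i \<in> gadget_configs" using F G that by auto
    qed
    then show "F = G" using F G by (auto intro: PiE_ext)
  qed
  then have "card (?tds ` ?configs) = 225 ^ k"
    by (simp add: card_image card_PiE card_gadget_configs)
  moreover have "card (?tds ` ?configs) \<le> Gamma_t {..<22 * k} (gadget_chain k)"
  proof (rule card_le_Gamma_t)
    fix D assume "D \<in> ?tds ` ?configs"
    then obtain F where "F \<in> ?configs" "D = ?tds F" by blast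
    moreover from this have "F \<in> {..<k} \<rightarrow> gadget_configs" by (simp add: PiE_def)
    ultimately show "total_dominating {..<22 * k} (gadget_chain k) D \<and> card D = gamma_t {..<22 * k} (gadget_chain k)"
      using gadget_chain_tds gamma_t_gadget_chain by simp
  qed simp
  ultimately show ?thesis by simp
qed

text \<open>With \<open>n = 22 k\<close> and \<open>\<gamma>\<^sub>t = 14 k\<close> the ratio in the bound is \<open>15/7\<close>, so it suffices that
  \<open>c\<^sup>1\<^sup>4 (15/7)\<^sup>7 \<le> 225\<close>.\<close>
lemma gadget_chain_bound:
  "(201/200::real) ^ (14 * k) * (15/7) powr (real (14 * k) / 2) \<le> 225 ^ k"
proof -
  have "real (14 * k) / 2 = real (7 * k)" by simp
  then have "(15/7::real) powr (real (14 * k) / 2) = (15/7) ^ (7 * k)"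
    by (simp only: powr_realpow)
  then have "(201/200::real) ^ (14 * k) * (15/7) powr (real (14 * k) / 2) = ((201/200) ^ 14 * (15/7) ^ 7) ^ k"
    by (simp add: power_mult power_mult_distrib)
  also have "\<dots> \<le> 225 ^ k"
    by (rule power_mono) (simp_all add: power_divide)
  finally show ?thesis .
qed

theorem mainTheorem7:
  shows "\<exists>c::real. c > 1 \<and>
    (\<forall>N::nat. \<exists>(V::nat set) E. is_tree V E \<and> card V \<ge> 2 \<and> gamma_t V E \<ge> N \<and>
       real (Gamma_t V E) \<ge> c ^ gamma_t V E *
         ((real (card V) - real (gamma_t V E) / 2) / (real (gamma_t V E) / 2))
           powr (real (gamma_t V E) / 2))"
proof (intro exI[of _ "201/200"] conjI allI)
  fix N :: nat
  define k where "k = Suc N"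
  let ?V = "{..<22 * k}" and ?E = "gadget_chain k"
  have gamma: "gamma_t ?V ?E = 14 * k"
    by (rule gamma_t_gadget_chain)
  have ratio: "(real (22 * k) - real (14 * k) / 2) / (real (14 * k) / 2) = 15 / 7"
    by (simp add: k_def field_simps)
  have "(225::real) ^ k \<le> real (Gamma_t ?V ?E)"
    using Gamma_t_gadget_chain[of k] by (metis of_nat_le_iff of_nat_numeral of_nat_power)
  then have "(201/200) ^ (14 * k) * (15/7) powr (real (14 * k) / 2) \<le> real (Gamma_t ?V ?E)"
    by (rule order_trans[OF gadget_chain_bound])
  moreover have "2 \<le> 22 * k" "N \<le> 14 * k" by (simp_all add: k_def)
  moreover have "is_tree ?V ?E"
    by (rule parent_function.is_tree_parent_graph[OF gadget.parent_function_chain_parent]) (simp add: k_def)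
  ultimately show "\<exists>(V::nat set) E. is_tree V E \<and> card V \<ge> 2 \<and> gamma_t V E \<ge> N \<and>
       real (Gamma_t V E) \<ge> (201/200) ^ gamma_t V E *
         ((real (card V) - real (gamma_t V E) / 2) / (real (gamma_t V E) / 2))
           powr (real (gamma_t V E) / 2)"
    by (intro exI[of _ ?V] exI[of _ ?E]) (simp add: gamma ratio)
qed simp

end
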